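(* Let $\alpha\in(0,1)$ be irrational with regular continued fraction $\alpha=\cfrac{1}{a_1+\cfrac{1}{a_2+\cdots}}$ (partial quotients $a_j\in\mathbb{Z}^+$). Then the sequence $(a_j)_{j\ge1}$ is bounded if and only if there is $\delta>0$ with $|\alpha_{k,1}|\ge\delta$ for all $k\ge1$, where $\alpha_{k,1}$ comes from the Minkowski chain of $\alpha$ (case $n=1$).
   Context: Minkowski chain (case $n=1$, $\ell=2$): for $r=(r_1,r_2)\in\mathbb{Z}^2$ put $\xi(r)=r_1\alpha+r_2$. For $m\in\mathbb{Z}^+$, $A_m$ is the nonsingular integral $2\times2$ matrix with rows $w_1,w_2$ chosen successively: $w_1$ is the nonzero $w\in\mathbb{Z}^2$ with $\max(|w_1|,|w_2|)\le m$ minimizing $|\xi(w)|$, and $w_2$ is the $w$ with $\max$-norm $\le m$, linearly independent of $w_1$, minimizing $|\xi(w)|$; each normalized so that its first nonzero entry is positive. The Minkowski chain $B_1,B_2,\dots$ is the sequence of distinct matrices among $A_1,A_2,\dots$ in order of appearance. For $B_k$ let $(\beta_1,\beta_2)^\top=B_k(\alpha,1)^\top$ and $\alpha_{k,1}=\beta_1/\beta_2$. *)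

theory Defs
  imports Complex_Main "HOL-Library.Infinite_Set"
begin

text \<open>Gauss-map remainders: x_0 = alpha, x_(n+1) = frac(1/x_n);
  partial quotients a_j = floor(1/x_(j-1)) for j >= 1, so that
  alpha = 1/(a_1 + 1/(a_2 + ...)).\<close>

fun cf_rem :: "real \<Rightarrow> nat \<Rightarrow> real" where
  "cf_rem \<alpha> 0 = \<alpha>"
| "cf_rem \<alpha> (Suc n) = frac (1 / cf_rem \<alpha> n)"

definition cf_quot :: "real \<Rightarrow> nat \<Rightarrow> int" where
  "cf_quot \<alpha> j = \<lfloor>1 / cf_rem \<alpha> (j - 1)\<rfloor>"

definition xi :: "real \<Rightarrow> int \<times> int \<Rightarrow> real" where
  "xi \<alpha> r = real_of_int (fst r) * \<alpha> + real_of_int (snd r)"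

definition box :: "nat \<Rightarrow> (int \<times> int) set" where
  "box m = {w. \<bar>fst w\<bar> \<le> int m \<and> \<bar>snd w\<bar> \<le> int m}"

definition normalized :: "int \<times> int \<Rightarrow> bool" where
  "normalized w \<longleftrightarrow> fst w > 0 \<or> (fst w = 0 \<and> snd w > 0)"

definition lin_indep2 :: "int \<times> int \<Rightarrow> int \<times> int \<Rightarrow> bool" where
  "lin_indep2 v w \<longleftrightarrow> fst v * snd w - snd v * fst w \<noteq> 0"

definition mink_w1 :: "real \<Rightarrow> nat \<Rightarrow> int \<times> int" where
  "mink_w1 \<alpha> m = (SOME w. w \<in> box m \<and> w \<noteq> (0, 0) \<and> normalized w \<and>
     (\<forall>v \<in> box m. v \<noteq> (0, 0) \<longrightarrow> \<bar>xi \<alpha> w\<bar> \<le> \<bar>xi \<alpha> v\<bar>))"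

definition mink_w2 :: "real \<Rightarrow> nat \<Rightarrow> int \<times> int" where
  "mink_w2 \<alpha> m = (SOME w. w \<in> box m \<and> lin_indep2 (mink_w1 \<alpha> m) w \<and> normalized w \<and>
     (\<forall>v \<in> box m. lin_indep2 (mink_w1 \<alpha> m) v \<longrightarrow> \<bar>xi \<alpha> w\<bar> \<le> \<bar>xi \<alpha> v\<bar>))"

text \<open>The matrix A_m, represented by its pair of rows (w_1, w_2).\<close>
definition mink_A :: "real \<Rightarrow> nat \<Rightarrow> (int \<times> int) \<times> (int \<times> int)" where
  "mink_A \<alpha> m = (mink_w1 \<alpha> m, mink_w2 \<alpha> m)"

definition chain_idx :: "real \<Rightarrow> nat set" where
  "chain_idx \<alpha> = {m. m \<ge> 1 \<and> (\<forall>j \<in> {1..<m}. mink_A \<alpha> j \<noteq> mink_A \<alpha> m)}"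

text \<open>B_k for k >= 1 (B_1 = A_1).\<close>
definition mink_B :: "real \<Rightarrow> nat \<Rightarrow> (int \<times> int) \<times> (int \<times> int)" where
  "mink_B \<alpha> k = mink_A \<alpha> (enumerate (chain_idx \<alpha>) (k - 1))"

text \<open>alpha_(k,1) = beta_1 / beta_2 where (beta_1, beta_2)^T = B_k (alpha, 1)^T.\<close>
definition alpha_k1 :: "real \<Rightarrow> nat \<Rightarrow> real" where
  "alpha_k1 \<alpha> k = xi \<alpha> (fst (mink_B \<alpha> k)) / xi \<alpha> (snd (mink_B \<alpha> k))"

end

theory Submission
  imports Defs
begin

text \<open>
  Let \<open>p\<^sub>k/q\<^sub>k\<close> be the convergents of \<open>\<alpha>\<close> and \<open>\<theta>\<^sub>k = |q\<^sub>k\<alpha> - p\<^sub>k|\<close>. The identity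
  \<open>q\<^sub>k\<^sub>+\<^sub>1\<theta>\<^sub>k + q\<^sub>k\<theta>\<^sub>k\<^sub>+\<^sub>1 = 1\<close> gives \<open>1/(a\<^sub>k\<^sub>+\<^sub>1 + 2) \<le> q\<^sub>k\<theta>\<^sub>k \<le> 1/a\<^sub>k\<^sub>+\<^sub>1\<close>, and together with the
  best approximation property of convergents this shows: bounded partial quotients make
  \<open>q |q\<alpha> + p|\<close> bounded below for all \<open>q \<ge> 1\<close>, unbounded ones make \<open>q\<^sub>k\<theta>\<^sub>k\<close> arbitrarily small.

  The first row \<open>w\<^sub>1 = (q, p)\<close> of \<open>A\<^sub>m\<close> is primitive with \<open>1 \<le> q \<le> m\<close> and
  \<open>|\<xi>(w\<^sub>1)| \<le> 1/(m + 1)\<close>. As \<open>A\<^sub>m\<close> is nonsingular, \<open>1 \<le> q |\<xi>(w\<^sub>2)| + m |\<xi>(w\<^sub>1)|\<close>; and completing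
  \<open>w\<^sub>1\<close> to a unimodular basis inside the box gives \<open>q |\<xi>(w\<^sub>2)| \<le> 2\<close>. Hence
  \<open>|\<xi>(w\<^sub>1)/\<xi>(w\<^sub>2)| \<ge> q |\<xi>(w\<^sub>1)|/2\<close> stays away from 0 in the first case, while in the second
  case, taking \<open>m = q\<^sub>k\<close>, it is at most about \<open>2 m |\<xi>(w\<^sub>1)| \<le> 2 q\<^sub>k\<theta>\<^sub>k\<close>. Finally, the chain
  \<open>B\<^sub>k\<close> runs through exactly the matrices \<open>A\<^sub>m\<close>, \<open>m \<ge> 1\<close>.
\<close>

section \<open>The linear form \<open>\<xi>\<close> on integer vectors\<close>

lemma xi_uminus: "xi \<alpha> (- fst w, - snd w) = - xi \<alpha> w"
  by (simp add: xi_def)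

lemma xi_det:
  "real_of_int (fst u) * xi \<alpha> w - real_of_int (fst w) * xi \<alpha> u =
   of_int (fst u * snd w - snd u * fst w)"
  by (simp add: xi_def algebra_simps)

lemma lin_indep2_imp_xi_bound:
  assumes "lin_indep2 u w"
  shows "1 \<le> \<bar>real_of_int (fst u)\<bar> * \<bar>xi \<alpha> w\<bar> + \<bar>real_of_int (fst w)\<bar> * \<bar>xi \<alpha> u\<bar>"
proof -
  have "1 \<le> \<bar>real_of_int (fst u * snd w - snd u * fst w)\<bar>"
    using assms unfolding lin_indep2_def by linarith
  also have "\<dots> = \<bar>real_of_int (fst u) * xi \<alpha> w - real_of_int (fst w) * xi \<alpha> u\<bar>"
    by (simp only: xi_det)
  also have "\<dots> \<le> \<bar>real_of_int (fst u)\<bar> * \<bar>xi \<alpha> w\<bar> + \<bar>real_of_int (fst w)\<bar> * \<bar>xi \<alpha> u\<bar>"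
    by (simp add: abs_triangle_ineq4 flip: abs_mult)
  finally show ?thesis .
qed

lemma lin_indep2_uminus: "lin_indep2 u (- fst w, - snd w) \<longleftrightarrow> lin_indep2 u w"
  unfolding lin_indep2_def by (auto simp: algebra_simps)

lemma lin_indep2_nonzero: "lin_indep2 u w \<Longrightarrow> w \<noteq> (0, 0)"
  unfolding lin_indep2_def by auto

lemma normalized_uminus: "w \<noteq> (0, 0) \<Longrightarrow> \<not> normalized w \<Longrightarrow> normalized (- fst w, - snd w)"
  unfolding normalized_def by (cases w) auto

lemma box_uminus: "w \<in> box m \<Longrightarrow> (- fst w, - snd w) \<in> box m"
  unfolding box_def by auto

lemma finite_box: "finite (box m)"
proof (rule finite_subset)
  show "box m \<subseteq> {- int m..int m} \<times> {- int m..int m}"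
    unfolding box_def by auto
qed simp

lemma ex_normalized_xi_minimizer:
  assumes "finite S" "v \<in> S" "(0, 0) \<notin> S" "\<And>w. w \<in> S \<Longrightarrow> (- fst w, - snd w) \<in> S"
  shows "\<exists>w \<in> S. normalized w \<and> (\<forall>v \<in> S. \<bar>xi \<alpha> w\<bar> \<le> \<bar>xi \<alpha> v\<bar>)"
proof -
  define w where "w = arg_min_on (\<lambda>w. \<bar>xi \<alpha> w\<bar>) S"
  have "S \<noteq> {}" using assms(2) by blast
  then have w: "w \<in> S" "\<forall>v \<in> S. \<bar>xi \<alpha> w\<bar> \<le> \<bar>xi \<alpha> v\<bar>"
    using arg_min_if_finite(1)[OF assms(1)] arg_min_least[OF assms(1), of _ "\<lambda>w. \<bar>xi \<alpha> w\<bar>"]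
    unfolding w_def by blast+
  show ?thesis
  proof (cases "normalized w")
    case False
    have "normalized (- fst w, - snd w)"
      using False w(1) assms(3) by (intro normalized_uminus) auto
    then show ?thesis
      using w assms(4) xi_uminus[of \<alpha> w] by (intro bexI[of _ "(- fst w, - snd w)"]) auto
  qed (use w in blast)
qed

lemma coprime_det_one_in_window:
  fixes q p m :: int
  assumes "coprime q p" "0 < q"
  obtains a b where "q * b - p * a = 1" "m - q < a" "a \<le> m"
proof -
  obtain x y where xy: "x * q + y * p = 1"
    using bezout_int[of q p] assms(1) by (auto simp: coprime_iff_gcd_eq_1)
  define k where "k = (m + y) div q"
  have "m - q < - y + k * q" "- y + k * q \<le> m"
    using assms(2) pos_mod_bound[of q "m + y"] pos_mod_sign[of q "m + y"]
      div_mult_mod_eq[of "m + y" q] unfolding k_def by linarith+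
  moreover have "q * (x + k * p) - p * (- y + k * q) = 1"
    using xy by (simp add: algebra_simps)
  ultimately show ?thesis using that by blast
qed

lemma in_box_if_abs_xi_less_1:
  assumes "0 \<le> \<alpha>" "\<alpha> \<le> 1" "0 \<le> a" "a \<le> int m" "\<bar>xi \<alpha> (a, b)\<bar> < 1"
  shows "(a, b) \<in> box m"
proof -
  have "0 \<le> a * \<alpha>" "a * \<alpha> \<le> a"
    using assms(1-3) mult_left_le[of \<alpha> "real_of_int a"] by simp_all
  then have "- a - 1 < real_of_int b" "real_of_int b < 1"
    using assms(5) by (auto simp: xi_def abs_less_iff)
  then show ?thesis using assms(4) unfolding box_def by simp
qed

lemma
  assumes "1 \<le> m"
  shows mink_w1_in_box: "mink_w1 \<alpha> m \<in> box m"
    and mink_w1_nonzero: "mink_w1 \<alpha> m \<noteq> (0, 0)"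
    and mink_w1_normalized: "normalized (mink_w1 \<alpha> m)"
    and mink_w1_minimal: "v \<in> box m \<Longrightarrow> v \<noteq> (0, 0) \<Longrightarrow> \<bar>xi \<alpha> (mink_w1 \<alpha> m)\<bar> \<le> \<bar>xi \<alpha> v\<bar>"
proof -
  let ?S = "box m - {(0, 0)}"
  have "(1, 0) \<in> ?S" using assms by (simp add: box_def)
  then have "\<exists>w \<in> ?S. normalized w \<and> (\<forall>v \<in> ?S. \<bar>xi \<alpha> w\<bar> \<le> \<bar>xi \<alpha> v\<bar>)"
    using finite_box[of m] box_uminus by (intro ex_normalized_xi_minimizer) auto
  then have "\<exists>w. w \<in> box m \<and> w \<noteq> (0, 0) \<and> normalized w \<and>
      (\<forall>v \<in> box m. v \<noteq> (0, 0) \<longrightarrow> \<bar>xi \<alpha> w\<bar> \<le> \<bar>xi \<alpha> v\<bar>)"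
    by auto
  then have w1: "mink_w1 \<alpha> m \<in> box m \<and> mink_w1 \<alpha> m \<noteq> (0, 0) \<and> normalized (mink_w1 \<alpha> m) \<and>
      (\<forall>v \<in> box m. v \<noteq> (0, 0) \<longrightarrow> \<bar>xi \<alpha> (mink_w1 \<alpha> m)\<bar> \<le> \<bar>xi \<alpha> v\<bar>)"
    unfolding mink_w1_def by (rule someI_ex)
  then show "mink_w1 \<alpha> m \<in> box m" "mink_w1 \<alpha> m \<noteq> (0, 0)" "normalized (mink_w1 \<alpha> m)"
    by auto
  show "\<bar>xi \<alpha> (mink_w1 \<alpha> m)\<bar> \<le> \<bar>xi \<alpha> v\<bar>" if "v \<in> box m" "v \<noteq> (0, 0)"
    using w1 that by blast
qed

lemma
  assumes "1 \<le> m"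
  shows mink_w2_in_box: "mink_w2 \<alpha> m \<in> box m"
    and mink_w2_lin_indep: "lin_indep2 (mink_w1 \<alpha> m) (mink_w2 \<alpha> m)"
    and mink_w2_minimal:
      "v \<in> box m \<Longrightarrow> lin_indep2 (mink_w1 \<alpha> m) v \<Longrightarrow> \<bar>xi \<alpha> (mink_w2 \<alpha> m)\<bar> \<le> \<bar>xi \<alpha> v\<bar>"
proof -
  let ?u = "mink_w1 \<alpha> m"
  let ?S = "{v \<in> box m. lin_indep2 ?u v}"
  have "(1, 0) \<in> ?S \<or> (0, 1) \<in> ?S"
    using mink_w1_nonzero[OF assms] assms by (cases ?u) (auto simp: box_def lin_indep2_def)
  then obtain v0 where v0: "v0 \<in> ?S" by blast
  have "(0, 0) \<notin> ?S" by (simp add: lin_indep2_def)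
  moreover have "finite ?S" using finite_box[of m] by simp
  moreover have "(- fst w, - snd w) \<in> ?S" if "w \<in> ?S" for w
    using that box_uminus lin_indep2_uminus by simp
  ultimately obtain w where "w \<in> ?S" "normalized w" "\<forall>v \<in> ?S. \<bar>xi \<alpha> w\<bar> \<le> \<bar>xi \<alpha> v\<bar>"
    using ex_normalized_xi_minimizer[of ?S v0] v0 by blast
  then have "\<exists>w. w \<in> box m \<and> lin_indep2 ?u w \<and> normalized w \<and>
      (\<forall>v \<in> box m. lin_indep2 ?u v \<longrightarrow> \<bar>xi \<alpha> w\<bar> \<le> \<bar>xi \<alpha> v\<bar>)"
    by blast
  then have w2: "mink_w2 \<alpha> m \<in> box m \<and> lin_indep2 ?u (mink_w2 \<alpha> m) \<and> normalized (mink_w2 \<alpha> m) \<and>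
      (\<forall>v \<in> box m. lin_indep2 ?u v \<longrightarrow> \<bar>xi \<alpha> (mink_w2 \<alpha> m)\<bar> \<le> \<bar>xi \<alpha> v\<bar>)"
    unfolding mink_w2_def by (rule someI_ex)
  then show "mink_w2 \<alpha> m \<in> box m" "lin_indep2 ?u (mink_w2 \<alpha> m)" by auto
  show "\<bar>xi \<alpha> (mink_w2 \<alpha> m)\<bar> \<le> \<bar>xi \<alpha> v\<bar>" if "v \<in> box m" "lin_indep2 ?u v"
    using w2 that by blast
qed

definition mink_ratio :: "real \<Rightarrow> nat \<Rightarrow> real" where
  "mink_ratio \<alpha> m = xi \<alpha> (mink_w1 \<alpha> m) / xi \<alpha> (mink_w2 \<alpha> m)"

lemma image_first_occurrences:
  fixes f :: "nat \<Rightarrow> 'a"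
  shows "f ` {m. 1 \<le> m \<and> (\<forall>j \<in> {1..<m}. f j \<noteq> f m)} = f ` {1..}"
proof
  show "f ` {1..} \<subseteq> f ` {m. 1 \<le> m \<and> (\<forall>j \<in> {1..<m}. f j \<noteq> f m)}"
  proof
    fix y assume "y \<in> f ` {1..}"
    then obtain m where m: "1 \<le> m" "f m = y" by auto
    define j where "j = (LEAST j. 1 \<le> j \<and> f j = y)"
    have j: "1 \<le> j \<and> f j = y" unfolding j_def by (rule LeastI[of _ m]) (use m in simp)
    have "f i \<noteq> f j" if "i \<in> {1..<j}" for i
    proof
      assume "f i = f j"
      then have "j \<le> i" using that j unfolding j_def by (intro Least_le) simp
      then show False using that by simp
    qed
    then show "y \<in> f ` {m. 1 \<le> m \<and> (\<forall>j \<in> {1..<m}. f j \<noteq> f m)}"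
      using j by (intro image_eqI[of _ _ j]) auto
  qed
qed auto

section \<open>Convergents of the continued fraction\<close>

text \<open>\<open>cf_num \<alpha> (Suc n) / cf_den \<alpha> (Suc n)\<close> is the \<open>n\<close>-th convergent \<open>[0; a\<^sub>1, \<dots>, a\<^sub>n]\<close>, so the
  index is shifted by one against the usual \<open>p\<^sub>n/q\<^sub>n\<close>; \<open>cf_dist \<alpha> k\<close>, the product of the first \<open>k\<close>
  Gauss-map remainders, equals \<open>|cf_den \<alpha> k * \<alpha> - cf_num \<alpha> k|\<close>.\<close>

fun cf_den :: "real \<Rightarrow> nat \<Rightarrow> int" where
  "cf_den \<alpha> 0 = 0"
| "cf_den \<alpha> (Suc 0) = 1"
| "cf_den \<alpha> (Suc (Suc n)) = cf_quot \<alpha> (Suc n) * cf_den \<alpha> (Suc n) + cf_den \<alpha> n"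

fun cf_num :: "real \<Rightarrow> nat \<Rightarrow> int" where
  "cf_num \<alpha> 0 = 1"
| "cf_num \<alpha> (Suc 0) = 0"
| "cf_num \<alpha> (Suc (Suc n)) = cf_quot \<alpha> (Suc n) * cf_num \<alpha> (Suc n) + cf_num \<alpha> n"

fun cf_dist :: "real \<Rightarrow> nat \<Rightarrow> real" where
  "cf_dist \<alpha> 0 = 1"
| "cf_dist \<alpha> (Suc n) = cf_dist \<alpha> n * cf_rem \<alpha> n"

definition cf_vec :: "real \<Rightarrow> nat \<Rightarrow> int \<times> int" where
  "cf_vec \<alpha> k = (cf_den \<alpha> k, - cf_num \<alpha> k)"

definition badly_approximable :: "real \<Rightarrow> bool" where
  "badly_approximable \<alpha> \<longleftrightarrow> (\<exists>c > 0. \<forall>q p.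
     1 \<le> q \<longrightarrow> c \<le> real_of_int q * \<bar>real_of_int q * \<alpha> + real_of_int p\<bar>)"

context
  fixes \<alpha> :: real
  assumes \<alpha>_pos: "0 < \<alpha>" and \<alpha>_less_1: "\<alpha> < 1" and \<alpha>_irrational: "\<alpha> \<notin> \<rat>"
begin

lemma cf_rem_bounds: "0 < cf_rem \<alpha> n \<and> cf_rem \<alpha> n < 1 \<and> cf_rem \<alpha> n \<notin> \<rat>"
proof (induction n)
  case 0
  then show ?case using \<alpha>_pos \<alpha>_less_1 \<alpha>_irrational by simp
next
  case (Suc n)
  let ?y = "1 / cf_rem \<alpha> n"
  have "?y \<notin> \<rat>"
    using Suc Rats_divide[OF Rats_1, of ?y] by auto
  then have irr: "frac ?y \<notin> \<rat>"
    using Rats_add[of "frac ?y" "of_int \<lfloor>?y\<rfloor>"] by (auto simp: frac_def)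
  then have "frac ?y \<noteq> 0" using Rats_0 by metis
  then show ?case using irr frac_ge_0[of ?y] frac_lt_1[of ?y] by simp
qed

lemma cf_rem_pos: "0 < cf_rem \<alpha> n" and cf_rem_less_1: "cf_rem \<alpha> n < 1"
  using cf_rem_bounds by auto

lemma cf_quot_Suc: "cf_quot \<alpha> (Suc n) = \<lfloor>1 / cf_rem \<alpha> n\<rfloor>"
  by (simp add: cf_quot_def)

lemma cf_rem_Suc: "cf_rem \<alpha> (Suc n) = 1 / cf_rem \<alpha> n - cf_quot \<alpha> (Suc n)"
  by (simp add: cf_quot_Suc frac_def)

lemma cf_quot_Suc_ge_1: "1 \<le> cf_quot \<alpha> (Suc n)"
proof -
  have "1 < 1 / cf_rem \<alpha> n" using cf_rem_pos[of n] cf_rem_less_1[of n] by simp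
  then show ?thesis unfolding cf_quot_Suc by linarith
qed

lemma cf_quot_ge_1: "1 \<le> k \<Longrightarrow> 1 \<le> cf_quot \<alpha> k"
  using cf_quot_Suc_ge_1[of "k - 1"] by simp

lemma cf_rem_gt: "1 / (cf_quot \<alpha> (Suc n) + 1) < cf_rem \<alpha> n"
proof -
  have "1 / cf_rem \<alpha> n < cf_quot \<alpha> (Suc n) + 1" unfolding cf_quot_Suc by linarith
  then show ?thesis using cf_rem_pos[of n] cf_quot_Suc_ge_1[of n] by (simp add: field_simps)
qed

lemma cf_den_nonneg: "0 \<le> cf_den \<alpha> n" and cf_den_Suc_ge_1: "1 \<le> cf_den \<alpha> (Suc n)"
proof -
  have "0 \<le> cf_den \<alpha> n \<and> 1 \<le> cf_den \<alpha> (Suc n)"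
  proof (induction n)
    case (Suc n)
    then have "1 \<le> cf_quot \<alpha> (Suc n) * cf_den \<alpha> (Suc n)"
      using cf_quot_Suc_ge_1[of n] mult_mono[of 1 _ 1 "cf_den \<alpha> (Suc n)"] by simp
    then show ?case using Suc by simp
  qed simp
  then show "0 \<le> cf_den \<alpha> n" "1 \<le> cf_den \<alpha> (Suc n)" by auto
qed

lemma cf_den_ge_1: "1 \<le> k \<Longrightarrow> 1 \<le> cf_den \<alpha> k"
  using cf_den_Suc_ge_1[of "k - 1"] by simp

lemma cf_quot_mult_den_le_den_Suc: "1 \<le> k \<Longrightarrow> cf_quot \<alpha> k * cf_den \<alpha> k \<le> cf_den \<alpha> (Suc k)"
  using cf_den_nonneg[of "k - 1"] by (cases k) auto

lemma cf_den_le_Suc: "cf_den \<alpha> n \<le> cf_den \<alpha> (Suc n)"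
proof (cases n)
  case (Suc m)
  have "cf_den \<alpha> n \<le> cf_quot \<alpha> n * cf_den \<alpha> n"
    using Suc cf_quot_Suc_ge_1[of m] cf_den_nonneg[of n] by (simp add: mult_le_cancel_right1)
  then show ?thesis using Suc cf_den_nonneg[of m] by simp
qed simp

lemma cf_den_Suc_le_mult: "1 \<le> k \<Longrightarrow> cf_den \<alpha> (Suc k) \<le> (cf_quot \<alpha> k + 1) * cf_den \<alpha> k"
  using cf_den_le_Suc[of "k - 1"] by (cases k) (auto simp: algebra_simps)

lemma cf_den_Suc_Suc_ge: "cf_den \<alpha> (Suc n) + cf_den \<alpha> n \<le> cf_den \<alpha> (Suc (Suc n))"
  using cf_den_le_Suc[of "Suc n"] cf_den_nonneg[of n]
    mult_right_mono[OF cf_quot_Suc_ge_1[of n] cf_den_nonneg[of "Suc n"]] by simp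

lemma cf_den_Suc_ge: "int n \<le> cf_den \<alpha> (Suc n)"
proof (induction n)
  case (Suc n)
  have "1 \<le> cf_den \<alpha> n \<or> n = 0" using cf_den_ge_1[of n] by linarith
  then show ?case using Suc cf_den_Suc_Suc_ge[of n] by auto
qed simp

lemma cf_den_bracket:
  assumes "1 \<le> q"
  obtains k where "1 \<le> k" "cf_den \<alpha> k \<le> q" "q < cf_den \<alpha> (Suc k)"
proof -
  define K where "K = (LEAST k. q < cf_den \<alpha> k)"
  have "q < cf_den \<alpha> (Suc (nat q + 1))" using cf_den_Suc_ge[of "nat q + 1"] assms by simp
  then have K: "q < cf_den \<alpha> K" unfolding K_def by (rule LeastI)
  have "2 \<le> K"
  proof (rule ccontr)
    assume "\<not> 2 \<le> K"
    then have "K = 0 \<or> K = 1" by auto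
    then show False using K assms by auto
  qed
  then obtain k where k: "K = Suc k" "1 \<le> k" by (cases K) auto
  then have "\<not> q < cf_den \<alpha> k" using not_less_Least[of k "\<lambda>k. q < cf_den \<alpha> k"] K_def by simp
  then show thesis using that k K by simp
qed

lemma cf_dist_pos: "0 < cf_dist \<alpha> n"
  by (induction n) (auto simp: cf_rem_pos)

lemma cf_dist_Suc_le: "cf_dist \<alpha> (Suc n) \<le> cf_dist \<alpha> n"
  using cf_dist_pos[of n] cf_rem_less_1[of n] by (simp add: mult_le_cancel_left1)

lemma cf_dist_less_1: "1 \<le> k \<Longrightarrow> cf_dist \<alpha> k < 1"
proof (induction k)
  case (Suc k)
  then show ?case using cf_dist_Suc_le[of k] cf_rem_less_1[of 0] by (cases k) auto
qed simp

lemma cf_dist_Suc_Suc: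
  "cf_dist \<alpha> (Suc (Suc n)) = cf_dist \<alpha> n - cf_quot \<alpha> (Suc n) * cf_dist \<alpha> (Suc n)"
  using cf_rem_pos[of n] by (simp del: cf_rem.simps add: cf_rem_Suc field_simps)

lemma cf_den_cross_dist: "cf_den \<alpha> (Suc k) * cf_dist \<alpha> k + cf_den \<alpha> k * cf_dist \<alpha> (Suc k) = 1"
proof (induction k)
  case 0
  then show ?case using cf_dist_Suc_Suc[of 0] by (simp add: algebra_simps)
next
  case (Suc k)
  then show ?case by (simp only: cf_dist_Suc_Suc cf_den.simps of_int_add of_int_mult)
      (simp add: algebra_simps)
qed

lemma cf_den_mult_sub_num: "cf_den \<alpha> k * \<alpha> - cf_num \<alpha> k = (-1) ^ Suc k * cf_dist \<alpha> k"
proof -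
  have "cf_den \<alpha> k * \<alpha> - cf_num \<alpha> k = (-1) ^ Suc k * cf_dist \<alpha> k \<and>
    cf_den \<alpha> (Suc k) * \<alpha> - cf_num \<alpha> (Suc k) = (-1) ^ Suc (Suc k) * cf_dist \<alpha> (Suc k)"
  proof (induction k)
    case (Suc k)
    have "cf_den \<alpha> (Suc (Suc k)) * \<alpha> - cf_num \<alpha> (Suc (Suc k)) =
      cf_quot \<alpha> (Suc k) * (cf_den \<alpha> (Suc k) * \<alpha> - cf_num \<alpha> (Suc k)) + (cf_den \<alpha> k * \<alpha> - cf_num \<alpha> k)"
      by (simp add: algebra_simps)
    also have "\<dots> = (-1) ^ Suc (Suc (Suc k)) * cf_dist \<alpha> (Suc (Suc k))"
      using Suc by (simp del: cf_dist.simps add: cf_dist_Suc_Suc algebra_simps)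
    finally show ?case using Suc by simp
  qed simp
  then show ?thesis ..
qed

lemma abs_xi_cf_vec: "\<bar>xi \<alpha> (cf_vec \<alpha> k)\<bar> = cf_dist \<alpha> k"
  using cf_den_mult_sub_num[of k] cf_dist_pos[of k]
  by (simp add: xi_def cf_vec_def abs_mult)

lemma cf_den_Suc_mult_dist_le_1: "cf_den \<alpha> (Suc k) * cf_dist \<alpha> k \<le> 1"
proof -
  have "0 \<le> cf_den \<alpha> k * cf_dist \<alpha> (Suc k)"
    using cf_den_nonneg[of k] cf_dist_pos[of "Suc k"] by (intro mult_nonneg_nonneg) auto
  then show ?thesis using cf_den_cross_dist[of k] by linarith
qed

lemma cf_quot_mult_den_dist_le_1:
  assumes "1 \<le> k"
  shows "cf_quot \<alpha> k * (cf_den \<alpha> k * cf_dist \<alpha> k) \<le> 1"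
proof -
  have "real_of_int (cf_quot \<alpha> k * cf_den \<alpha> k) \<le> cf_den \<alpha> (Suc k)"
    using cf_quot_mult_den_le_den_Suc[OF assms] by linarith
  then have "cf_quot \<alpha> k * cf_den \<alpha> k * cf_dist \<alpha> k \<le> cf_den \<alpha> (Suc k) * cf_dist \<alpha> k"
    using cf_dist_pos[of k] by (intro mult_right_mono) auto
  then show ?thesis using cf_den_Suc_mult_dist_le_1[of k] by (simp add: mult.assoc)
qed

lemma one_le_cf_den_dist:
  assumes "1 \<le> k"
  shows "1 \<le> (cf_quot \<alpha> k + 2) * (cf_den \<alpha> k * cf_dist \<alpha> k)"
proof -
  have "real_of_int (cf_den \<alpha> (Suc k)) \<le> (cf_quot \<alpha> k + 1) * cf_den \<alpha> k"
    using cf_den_Suc_le_mult[OF assms] by (metis of_int_add of_int_le_iff of_int_mult of_int_1)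
  then have "cf_den \<alpha> (Suc k) * cf_dist \<alpha> k \<le> (cf_quot \<alpha> k + 1) * cf_den \<alpha> k * cf_dist \<alpha> k"
    using cf_dist_pos[of k] by (intro mult_right_mono) auto
  moreover have "cf_den \<alpha> k * cf_dist \<alpha> (Suc k) \<le> cf_den \<alpha> k * cf_dist \<alpha> k"
    using cf_dist_Suc_le[of k] cf_den_nonneg[of k] by (intro mult_left_mono) auto
  ultimately show ?thesis using cf_den_cross_dist[of k] by (simp add: algebra_simps)
qed

lemma cf_vec_in_box:
  assumes "1 \<le> k" "cf_den \<alpha> k \<le> int m"
  shows "cf_vec \<alpha> k \<in> box m"
proof -
  have "\<bar>xi \<alpha> (cf_vec \<alpha> k)\<bar> < 1" using abs_xi_cf_vec cf_dist_less_1[OF assms(1)] by simp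
  then show ?thesis
    using in_box_if_abs_xi_less_1[of \<alpha> "cf_den \<alpha> k" m] assms cf_den_nonneg[of k] \<alpha>_pos \<alpha>_less_1
    by (simp add: cf_vec_def)
qed

lemma cf_vec_nonzero: "1 \<le> k \<Longrightarrow> cf_vec \<alpha> k \<noteq> (0, 0)"
  using cf_den_ge_1[of k] by (simp add: cf_vec_def)

lemma cf_best_approximation:
  assumes k: "1 \<le> k" and lo: "cf_den \<alpha> k \<le> q" and hi: "q < cf_den \<alpha> (Suc k)"
  shows "cf_dist \<alpha> (Suc k) \<le> \<bar>xi \<alpha> (q, p)\<bar>"
proof (cases "lin_indep2 (cf_vec \<alpha> k) (q, p)")
  case True
  have Q: "1 \<le> cf_den \<alpha> k" using cf_den_ge_1[OF k] .
  have "1 \<le> cf_den \<alpha> k * \<bar>xi \<alpha> (q, p)\<bar> + q * cf_dist \<alpha> k"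
    using lin_indep2_imp_xi_bound[OF True, of \<alpha>] Q lo by (simp add: cf_vec_def abs_xi_cf_vec[symmetric])
  also have "q * cf_dist \<alpha> k \<le> cf_den \<alpha> (Suc k) * cf_dist \<alpha> k"
    using hi cf_dist_pos[of k] by simp
  finally have "cf_den \<alpha> k * cf_dist \<alpha> (Suc k) \<le> cf_den \<alpha> k * \<bar>xi \<alpha> (q, p)\<bar>"
    using cf_den_cross_dist[of k] by linarith
  then show ?thesis using Q by simp
next
  case False
  then have "cf_den \<alpha> k * xi \<alpha> (q, p) = q * xi \<alpha> (cf_vec \<alpha> k)"
    using xi_det[of "cf_vec \<alpha> k" \<alpha> "(q, p)"] by (simp add: lin_indep2_def cf_vec_def)
  then have "cf_den \<alpha> k * \<bar>xi \<alpha> (q, p)\<bar> = q * cf_dist \<alpha> k"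
    using cf_den_ge_1[OF k] lo abs_xi_cf_vec[of k]
    by (metis abs_mult abs_of_nonneg of_int_0_le_iff order.trans zero_le_one)
  also have "\<dots> \<ge> cf_den \<alpha> k * cf_dist \<alpha> k" using lo cf_dist_pos[of k] by simp
  finally have "cf_dist \<alpha> k \<le> \<bar>xi \<alpha> (q, p)\<bar>" using cf_den_ge_1[OF k] by simp
  then show ?thesis using cf_dist_Suc_le[of k] by linarith
qed

lemma bounded_cf_quot_imp_badly_approximable:
  assumes C: "\<forall>j \<ge> 1. \<bar>cf_quot \<alpha> j\<bar> \<le> C"
  shows "badly_approximable \<alpha>"
proof -
  have C1: "1 \<le> C" using C cf_quot_ge_1[of 1] by force
  define c :: real where "c = 1 / ((C + 2) * (C + 1))"
  have "c \<le> q * \<bar>q * \<alpha> + p\<bar>" if q: "1 \<le> q" for q p :: int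
  proof -
    obtain k where k: "1 \<le> k" "cf_den \<alpha> k \<le> q" "q < cf_den \<alpha> (Suc k)"
      using cf_den_bracket[OF q] .
    define a where "a = cf_quot \<alpha> k"
    define b where "b = cf_quot \<alpha> (Suc k)"
    have a: "1 \<le> a" "a \<le> C" using C k(1) cf_quot_ge_1[OF k(1)] unfolding a_def by force+
    have b: "1 \<le> b" "b \<le> C" using C[rule_format, of "Suc k"] cf_quot_Suc_ge_1[of k]
      unfolding b_def by auto
    have "(real_of_int a + 2) * (b + 1) \<le> (real_of_int C + 2) * (C + 1)"
      using a b by (intro mult_mono) auto
    then have "c \<le> 1 / (a + 2) / (b + 1)" unfolding c_def using a b by (simp add: frac_le)
    also have "\<dots> \<le> cf_den \<alpha> k * cf_dist \<alpha> k / (b + 1)"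
      using one_le_cf_den_dist[OF k(1)] a b unfolding a_def
      by (intro divide_right_mono) (auto simp: divide_le_eq mult.commute)
    also have "\<dots> \<le> cf_den \<alpha> k * cf_dist \<alpha> k * cf_rem \<alpha> k"
      using mult_left_mono[OF less_imp_le[OF cf_rem_gt[of k]], of "cf_den \<alpha> k * cf_dist \<alpha> k"]
        cf_den_ge_1[OF k(1)] cf_dist_pos[of k] unfolding b_def by simp
    also have "\<dots> = cf_den \<alpha> k * cf_dist \<alpha> (Suc k)" by simp
    also have "\<dots> \<le> q * cf_dist \<alpha> (Suc k)"
      using k(2) cf_dist_pos[of "Suc k"] by (intro mult_right_mono) auto
    also have "\<dots> \<le> q * \<bar>q * \<alpha> + p\<bar>"
      using cf_best_approximation[OF k, of p] q by (intro mult_left_mono) (auto simp: xi_def)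
    finally show ?thesis .
  qed
  moreover have "0 < c" using C1 unfolding c_def by simp
  ultimately show ?thesis unfolding badly_approximable_def by blast
qed

lemma unbounded_cf_quot_imp_small_den_dist:
  assumes "\<not> (\<exists>C. \<forall>j \<ge> 1. \<bar>cf_quot \<alpha> j\<bar> \<le> C)" and "0 < \<eta>"
  obtains j where "1 \<le> j" "cf_den \<alpha> j * cf_dist \<alpha> j < \<eta>"
proof -
  obtain j where j: "1 \<le> j" "\<lceil>1 / \<eta>\<rceil> < \<bar>cf_quot \<alpha> j\<bar>"
    using assms(1) by (meson not_le)
  have "1 / \<eta> < cf_quot \<alpha> j" using j cf_quot_ge_1[OF j(1)] by linarith
  moreover have "0 < cf_den \<alpha> j * cf_dist \<alpha> j"
    using cf_den_ge_1[OF j(1)] cf_dist_pos[of j] by simp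
  ultimately have "1 / \<eta> * (cf_den \<alpha> j * cf_dist \<alpha> j) < 1"
    using cf_quot_mult_den_dist_le_1[OF j(1)] mult_strict_right_mono by fastforce
  then show thesis using that j(1) assms(2) by (simp add: field_simps)
qed

lemma xi_nonzero:
  assumes "w \<noteq> (0, 0)"
  shows "xi \<alpha> w \<noteq> 0"
proof
  assume xi0: "xi \<alpha> w = 0"
  show False
  proof (cases "fst w = 0")
    case True
    then show False using xi0 assms by (cases w) (simp add: xi_def)
  next
    case False
    then have "\<alpha> = - of_int (snd w) / of_int (fst w)" using xi0 by (simp add: xi_def field_simps)
    then show False using \<alpha>_irrational by simp
  qed
qed

lemma mink_w1_le_cf_dist:
  assumes "1 \<le> k" "cf_den \<alpha> k \<le> int m"
  shows "\<bar>xi \<alpha> (mink_w1 \<alpha> m)\<bar> \<le> cf_dist \<alpha> k"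
proof -
  have "1 \<le> m" using assms cf_den_ge_1[of k] by linarith
  then have "\<bar>xi \<alpha> (mink_w1 \<alpha> m)\<bar> \<le> \<bar>xi \<alpha> (cf_vec \<alpha> k)\<bar>"
    using cf_vec_in_box[OF assms] cf_vec_nonzero[OF assms(1)] by (rule mink_w1_minimal)
  then show ?thesis by (simp add: abs_xi_cf_vec)
qed

lemma mink_w1_small:
  assumes "1 \<le> m"
  shows "\<bar>xi \<alpha> (mink_w1 \<alpha> m)\<bar> \<le> 1 / (real m + 1)"
proof -
  obtain k where k: "1 \<le> k" "cf_den \<alpha> k \<le> int m" "int m < cf_den \<alpha> (Suc k)"
    using cf_den_bracket[of "int m"] assms by auto
  have "(real m + 1) * cf_dist \<alpha> k \<le> cf_den \<alpha> (Suc k) * cf_dist \<alpha> k"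
    using k(3) cf_dist_pos[of k] by (intro mult_right_mono) auto
  then have "cf_dist \<alpha> k \<le> 1 / (real m + 1)"
    using cf_den_Suc_mult_dist_le_1[of k] by (simp add: field_simps)
  then show ?thesis using mink_w1_le_cf_dist[OF k(1,2)] by linarith
qed

lemma mink_w1_fst_ge_1:
  assumes "1 \<le> m"
  shows "1 \<le> fst (mink_w1 \<alpha> m)"
proof (rule ccontr)
  assume "\<not> 1 \<le> fst (mink_w1 \<alpha> m)"
  then have "fst (mink_w1 \<alpha> m) = 0" "1 \<le> snd (mink_w1 \<alpha> m)"
    using mink_w1_normalized[OF assms, of \<alpha>] unfolding normalized_def by auto
  then have "1 \<le> \<bar>xi \<alpha> (mink_w1 \<alpha> m)\<bar>" by (simp add: xi_def)
  moreover have "1 / (real m + 1) < 1" using assms by simp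
  ultimately show False using mink_w1_small[OF assms] by linarith
qed

lemma mink_w1_coprime:
  assumes "1 \<le> m"
  shows "coprime (fst (mink_w1 \<alpha> m)) (snd (mink_w1 \<alpha> m))"
proof (rule ccontr)
  define q p where "q = fst (mink_w1 \<alpha> m)" and "p = snd (mink_w1 \<alpha> m)"
  define g where "g = gcd q p"
  assume "\<not> coprime (fst (mink_w1 \<alpha> m)) (snd (mink_w1 \<alpha> m))"
  moreover have q: "1 \<le> q" using mink_w1_fst_ge_1[OF assms] unfolding q_def .
  ultimately have "g \<noteq> 1" "0 < g"
    unfolding g_def q_def p_def coprime_iff_gcd_eq_1 by (auto simp: gcd_pos_int)
  then have g: "2 \<le> g" by linarith
  obtain a b where ab: "q = g * a" "p = g * b" unfolding g_def by (meson gcd_dvd1 gcd_dvd2 dvdE)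
  have "\<bar>a\<bar> \<le> \<bar>q\<bar>" "\<bar>b\<bar> \<le> \<bar>p\<bar>" using ab g by (simp_all add: abs_mult mult_le_cancel_right1)
  then have "(a, b) \<in> box m"
    using mink_w1_in_box[OF assms, of \<alpha>] unfolding q_def p_def box_def by auto
  moreover have "(a, b) \<noteq> (0, 0)" using ab q by auto
  ultimately have "\<bar>xi \<alpha> (mink_w1 \<alpha> m)\<bar> \<le> \<bar>xi \<alpha> (a, b)\<bar>" by (rule mink_w1_minimal[OF assms])
  moreover have "xi \<alpha> (mink_w1 \<alpha> m) = g * xi \<alpha> (a, b)"
    using ab unfolding q_def p_def xi_def by (simp add: algebra_simps)
  moreover have "0 < \<bar>xi \<alpha> (a, b)\<bar>" using xi_nonzero \<open>(a, b) \<noteq> (0, 0)\<close> by simp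
  ultimately show False using g by (simp add: abs_mult mult_le_cancel_right1)
qed

text \<open>Completing the primitive vector \<open>w\<^sub>1\<close> to a basis of determinant 1 inside the box
  yields an independent vector \<open>v\<close> with \<open>q\<^sub>1 |\<xi>(v)| < 2\<close>.\<close>

lemma mink_w2_small:
  assumes "1 \<le> m"
  shows "fst (mink_w1 \<alpha> m) * \<bar>xi \<alpha> (mink_w2 \<alpha> m)\<bar> \<le> 2"
proof -
  define q p where "q = fst (mink_w1 \<alpha> m)" and "p = snd (mink_w1 \<alpha> m)"
  have q: "1 \<le> q" "q \<le> int m"
    using mink_w1_fst_ge_1[OF assms] mink_w1_in_box[OF assms, of \<alpha>] unfolding q_def box_def by auto
  show ?thesis
  proof (cases "q = 1")
    case True
    have "(0, 1) \<in> box m" "lin_indep2 (mink_w1 \<alpha> m) (0, 1)"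
      using assms q unfolding box_def lin_indep2_def q_def by auto
    then have "\<bar>xi \<alpha> (mink_w2 \<alpha> m)\<bar> \<le> \<bar>xi \<alpha> (0, 1)\<bar>" by (rule mink_w2_minimal[OF assms])
    then have "\<bar>xi \<alpha> (mink_w2 \<alpha> m)\<bar> \<le> 1" by (simp add: xi_def)
    then show ?thesis using True unfolding q_def by simp
  next
    case False
    have "coprime q p" "0 < q" using mink_w1_coprime[OF assms] q unfolding q_def p_def by auto
    then obtain a b where ab: "q * b - p * a = 1" "int m - q < a" "a \<le> int m"
      by (rule coprime_det_one_in_window)
    have "q * xi \<alpha> (a, b) - a * xi \<alpha> (mink_w1 \<alpha> m) = 1"
      using xi_det[of "mink_w1 \<alpha> m" \<alpha> "(a, b)"] ab(1) unfolding q_def p_def by simp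
    then have "q * xi \<alpha> (a, b) = 1 + a * xi \<alpha> (mink_w1 \<alpha> m)" by simp
    moreover have "0 \<le> a" using ab q by linarith
    ultimately have "q * \<bar>xi \<alpha> (a, b)\<bar> \<le> 1 + a * \<bar>xi \<alpha> (mink_w1 \<alpha> m)\<bar>"
      using q abs_triangle_ineq[of 1 "a * xi \<alpha> (mink_w1 \<alpha> m)"] by (simp add: abs_mult)
    also have "a * \<bar>xi \<alpha> (mink_w1 \<alpha> m)\<bar> \<le> real m * (1 / (real m + 1))"
      using ab(3) mink_w1_small[OF assms] by (intro mult_mono) auto
    also have "real m * (1 / (real m + 1)) < 1" by (simp add: divide_less_eq)
    finally have v: "q * \<bar>xi \<alpha> (a, b)\<bar> < 2" by simp
    moreover have "2 * \<bar>xi \<alpha> (a, b)\<bar> \<le> q * \<bar>xi \<alpha> (a, b)\<bar>"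
      using False q by (intro mult_right_mono) auto
    ultimately have "\<bar>xi \<alpha> (a, b)\<bar> < 1" by linarith
    then have "(a, b) \<in> box m"
      using ab q \<alpha>_pos \<alpha>_less_1 by (intro in_box_if_abs_xi_less_1) auto
    moreover have "lin_indep2 (mink_w1 \<alpha> m) (a, b)"
      using ab(1) unfolding lin_indep2_def q_def p_def by simp
    ultimately have "\<bar>xi \<alpha> (mink_w2 \<alpha> m)\<bar> \<le> \<bar>xi \<alpha> (a, b)\<bar>" by (rule mink_w2_minimal[OF assms])
    then have "q * \<bar>xi \<alpha> (mink_w2 \<alpha> m)\<bar> \<le> q * \<bar>xi \<alpha> (a, b)\<bar>"
      using q by (intro mult_left_mono) auto
    then show ?thesis using v unfolding q_def by linarith
  qed
qed

lemma mink_ratio_upper: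
  assumes "1 \<le> m" and small: "m * \<bar>xi \<alpha> (mink_w1 \<alpha> m)\<bar> < 1"
  shows "\<bar>mink_ratio \<alpha> m\<bar>
    \<le> m * \<bar>xi \<alpha> (mink_w1 \<alpha> m)\<bar> / (1 - m * \<bar>xi \<alpha> (mink_w1 \<alpha> m)\<bar>)"
proof -
  define q e X where "q = fst (mink_w1 \<alpha> m)" and "e = \<bar>xi \<alpha> (mink_w1 \<alpha> m)\<bar>"
    and "X = \<bar>xi \<alpha> (mink_w2 \<alpha> m)\<bar>"
  have q: "1 \<le> q" "q \<le> int m"
    using mink_w1_fst_ge_1[OF assms(1)] mink_w1_in_box[OF assms(1), of \<alpha>] unfolding q_def box_def by auto
  have "\<bar>fst (mink_w2 \<alpha> m)\<bar> \<le> int m"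
    using mink_w2_in_box[OF assms(1), of \<alpha>] unfolding box_def by auto
  then have "\<bar>real_of_int (fst (mink_w2 \<alpha> m))\<bar> * e \<le> m * e"
    unfolding e_def by (intro mult_right_mono) auto
  then have le: "1 - m * e \<le> q * X"
    using lin_indep2_imp_xi_bound[OF mink_w2_lin_indep[OF assms(1), of \<alpha>], of \<alpha>] q
    unfolding q_def e_def X_def by simp
  have pos: "0 < 1 - m * e" using small unfolding e_def by simp
  have "\<bar>mink_ratio \<alpha> m\<bar> = e * q / (q * X)"
    using q unfolding mink_ratio_def e_def X_def by (simp add: abs_divide)
  also have "\<dots> \<le> e * q / (1 - m * e)"
    using le pos q unfolding e_def by (intro divide_left_mono) auto
  also have "\<dots> \<le> m * e / (1 - m * e)"
    using pos mult_right_mono[of "real_of_int q" "real m" e] q unfolding e_def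
    by (intro divide_right_mono) (auto simp: mult.commute)
  finally show ?thesis unfolding e_def .
qed

lemma mink_ratio_lower:
  assumes "1 \<le> m" "0 < c"
    and c: "\<forall>q p. 1 \<le> q \<longrightarrow> c \<le> real_of_int q * \<bar>real_of_int q * \<alpha> + real_of_int p\<bar>"
  shows "c / 2 \<le> \<bar>mink_ratio \<alpha> m\<bar>"
proof -
  define q e X where "q = fst (mink_w1 \<alpha> m)" and "e = \<bar>xi \<alpha> (mink_w1 \<alpha> m)\<bar>"
    and "X = \<bar>xi \<alpha> (mink_w2 \<alpha> m)\<bar>"
  have q: "1 \<le> q" using mink_w1_fst_ge_1[OF assms(1)] unfolding q_def .
  have "c \<le> q * e" using c q unfolding q_def e_def xi_def by simp
  moreover have "q * X \<le> 2" using mink_w2_small[OF assms(1)] unfolding q_def X_def .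
  moreover have "0 < X"
    using xi_nonzero lin_indep2_nonzero[OF mink_w2_lin_indep[OF assms(1), of \<alpha>]] unfolding X_def by simp
  moreover have "c / 2 * (q * X) \<le> c / 2 * 2"
    using \<open>q * X \<le> 2\<close> \<open>0 < c\<close> by (intro mult_left_mono) auto
  ultimately have "q * (c / 2 * X) \<le> q * e" by (simp add: algebra_simps)
  then have "c / 2 * X \<le> e" using q by simp
  then show ?thesis using \<open>0 < X\<close> unfolding mink_ratio_def e_def X_def by (simp add: abs_divide le_divide_eq)
qed

section \<open>The Minkowski chain\<close>

lemma infinite_mink_A_image: "infinite (mink_A \<alpha> ` {1..})"
proof
  define F where "F = (\<lambda>j. \<bar>xi \<alpha> (mink_w1 \<alpha> j)\<bar>) ` {1..}"
  assume "finite (mink_A \<alpha> ` {1..})"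
  then have "finite ((\<lambda>A. \<bar>xi \<alpha> (fst A)\<bar>) ` mink_A \<alpha> ` {1..})" by simp
  then have fin: "finite F" unfolding F_def by (simp add: image_image mink_A_def)
  have "Min F \<in> F" using fin by (intro Min_in) (auto simp: F_def)
  then obtain j where "1 \<le> j" "Min F = \<bar>xi \<alpha> (mink_w1 \<alpha> j)\<bar>" by (auto simp: F_def)
  then have \<mu>: "0 < Min F" using xi_nonzero mink_w1_nonzero by simp
  obtain m :: nat where m: "1 / Min F < m" using reals_Archimedean2 by blast
  then have "0 < real m" using \<mu> by (meson divide_pos_pos less_trans zero_less_one)
  then have "1 \<le> m" by simp
  have "1 / (real m + 1) < Min F" using m \<mu> by (simp add: field_simps)
  then have "\<bar>xi \<alpha> (mink_w1 \<alpha> m)\<bar> < Min F" using mink_w1_small[OF \<open>1 \<le> m\<close>] by linarith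
  moreover have "Min F \<le> \<bar>xi \<alpha> (mink_w1 \<alpha> m)\<bar>"
    using fin \<open>1 \<le> m\<close> unfolding F_def by (intro Min_le) auto
  ultimately show False by simp
qed

lemma mink_B_image: "mink_B \<alpha> ` {1..} = mink_A \<alpha> ` {1..}"
proof -
  have first: "mink_A \<alpha> ` chain_idx \<alpha> = mink_A \<alpha> ` {1..}"
    unfolding chain_idx_def by (rule image_first_occurrences)
  then have "infinite (chain_idx \<alpha>)" using infinite_mink_A_image by (metis finite_imageI)
  then have enum: "range (enumerate (chain_idx \<alpha>)) = chain_idx \<alpha>" by (rule range_enumerate)
  have "n \<in> (\<lambda>k. k - 1) ` {1..}" for n :: nat by (rule image_eqI[of _ _ "Suc n"]) auto
  then have "(\<lambda>k. k - 1) ` {1..} = (UNIV :: nat set)" by blast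
  then have "mink_B \<alpha> ` {1..} = mink_A \<alpha> ` range (enumerate (chain_idx \<alpha>))"
    unfolding mink_B_def by (metis image_image)
  then show ?thesis using enum first by simp
qed

lemma alpha_k1_image: "alpha_k1 \<alpha> ` {1..} = mink_ratio \<alpha> ` {1..}"
proof -
  define r where "r A = xi \<alpha> (fst A) / xi \<alpha> (snd A)" for A :: "(int \<times> int) \<times> (int \<times> int)"
  have "alpha_k1 \<alpha> ` {1..} = r ` mink_B \<alpha> ` {1..}" "mink_ratio \<alpha> ` {1..} = r ` mink_A \<alpha> ` {1..}"
    by (simp_all add: image_image r_def alpha_k1_def mink_ratio_def mink_A_def)
  then show ?thesis using mink_B_image by simp
qed

lemma alpha_k1_bounded_below_iff:
  "(\<forall>k \<ge> 1. \<delta> \<le> \<bar>alpha_k1 \<alpha> k\<bar>) \<longleftrightarrow> (\<forall>m \<ge> 1. \<delta> \<le> \<bar>mink_ratio \<alpha> m\<bar>)"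
proof -
  have "(\<forall>k \<ge> 1. \<delta> \<le> \<bar>alpha_k1 \<alpha> k\<bar>) \<longleftrightarrow> (\<forall>y \<in> alpha_k1 \<alpha> ` {1..}. \<delta> \<le> \<bar>y\<bar>)" by auto
  also have "\<dots> \<longleftrightarrow> (\<forall>y \<in> mink_ratio \<alpha> ` {1..}. \<delta> \<le> \<bar>y\<bar>)" by (simp only: alpha_k1_image)
  also have "\<dots> \<longleftrightarrow> (\<forall>m \<ge> 1. \<delta> \<le> \<bar>mink_ratio \<alpha> m\<bar>)" by auto
  finally show ?thesis .
qed

lemma badly_approximable_imp_mink_ratio_bounded_below:
  assumes "badly_approximable \<alpha>"
  shows "\<exists>\<delta> > 0. \<forall>m \<ge> 1. \<delta> \<le> \<bar>mink_ratio \<alpha> m\<bar>"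
proof -
  obtain c where "0 < c"
    and c: "\<forall>q p. 1 \<le> q \<longrightarrow> c \<le> real_of_int q * \<bar>real_of_int q * \<alpha> + real_of_int p\<bar>"
    using assms unfolding badly_approximable_def by blast
  then have "\<forall>m \<ge> 1. c / 2 \<le> \<bar>mink_ratio \<alpha> m\<bar>" using mink_ratio_lower by blast
  then show ?thesis using \<open>0 < c\<close> by (intro exI[of _ "c / 2"]) simp
qed

lemma unbounded_cf_quot_imp_small_mink_ratio:
  assumes "\<not> (\<exists>C. \<forall>j \<ge> 1. \<bar>cf_quot \<alpha> j\<bar> \<le> C)" and "0 < \<delta>"
  obtains m where "1 \<le> m" "\<bar>mink_ratio \<alpha> m\<bar> < \<delta>"
proof -
  define \<eta> where "\<eta> = min (1 / 2) (\<delta> / 4)"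
  have \<eta>: "0 < \<eta>" "\<eta> \<le> 1 / 2" "\<eta> \<le> \<delta> / 4" unfolding \<eta>_def using assms(2) by auto
  obtain j where j: "1 \<le> j" "cf_den \<alpha> j * cf_dist \<alpha> j < \<eta>"
    using unbounded_cf_quot_imp_small_den_dist[OF assms(1) \<eta>(1)] .
  define m where "m = nat (cf_den \<alpha> j)"
  have m: "1 \<le> m" "int m = cf_den \<alpha> j" using cf_den_ge_1[OF j(1)] unfolding m_def by auto
  define E where "E = m * \<bar>xi \<alpha> (mink_w1 \<alpha> m)\<bar>"
  have "E = cf_den \<alpha> j * \<bar>xi \<alpha> (mink_w1 \<alpha> m)\<bar>"
    unfolding E_def by (metis m(2) of_int_of_nat_eq)
  also have "\<dots> \<le> cf_den \<alpha> j * cf_dist \<alpha> j"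
    using mink_w1_le_cf_dist[OF j(1)] m(2) cf_den_ge_1[OF j(1)] by (intro mult_left_mono) auto
  finally have "E \<le> cf_den \<alpha> j * cf_dist \<alpha> j" .
  then have E: "0 \<le> E" "E < \<eta>" using j(2) unfolding E_def by auto
  have "\<bar>mink_ratio \<alpha> m\<bar> \<le> E / (1 - E)"
    using mink_ratio_upper[OF m(1)] E \<eta> unfolding E_def by simp
  also have "\<dots> \<le> 2 * E"
    using E \<eta> mult_left_mono[of "2 * E" 1 E] by (simp add: divide_le_eq algebra_simps)
  also have "\<dots> < \<delta>" using E \<eta> by linarith
  finally show thesis using that m(1) by blast
qed

end

theorem lemma4p2:
  fixes \<alpha> :: real
  assumes "0 < \<alpha>" and "\<alpha> < 1" and "\<alpha> \<notin> \<rat>"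
  shows "(\<exists>C. \<forall>j \<ge> 1. \<bar>cf_quot \<alpha> j\<bar> \<le> C) \<longleftrightarrow>
         (\<exists>\<delta> > 0. \<forall>k \<ge> 1. \<bar>alpha_k1 \<alpha> k\<bar> \<ge> \<delta>)"
proof -
  have "(\<exists>C. \<forall>j \<ge> 1. \<bar>cf_quot \<alpha> j\<bar> \<le> C) \<longleftrightarrow> (\<exists>\<delta> > 0. \<forall>m \<ge> 1. \<delta> \<le> \<bar>mink_ratio \<alpha> m\<bar>)"
  proof
    assume "\<exists>C. \<forall>j \<ge> 1. \<bar>cf_quot \<alpha> j\<bar> \<le> C"
    then have "badly_approximable \<alpha>" using bounded_cf_quot_imp_badly_approximable[OF assms] by blast
    then show "\<exists>\<delta> > 0. \<forall>m \<ge> 1. \<delta> \<le> \<bar>mink_ratio \<alpha> m\<bar>"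
      by (rule badly_approximable_imp_mink_ratio_bounded_below[OF assms])
  next
    assume "\<exists>\<delta> > 0. \<forall>m \<ge> 1. \<delta> \<le> \<bar>mink_ratio \<alpha> m\<bar>"
    then obtain \<delta> where \<delta>: "0 < \<delta>" "\<forall>m \<ge> 1. \<delta> \<le> \<bar>mink_ratio \<alpha> m\<bar>" by blast
    show "\<exists>C. \<forall>j \<ge> 1. \<bar>cf_quot \<alpha> j\<bar> \<le> C"
    proof (rule ccontr)
      assume "\<not> (\<exists>C. \<forall>j \<ge> 1. \<bar>cf_quot \<alpha> j\<bar> \<le> C)"
      then obtain m where "1 \<le> m" "\<bar>mink_ratio \<alpha> m\<bar> < \<delta>"
        using unbounded_cf_quot_imp_small_mink_ratio[OF assms _ \<delta>(1)] by blast
      then show False using \<delta>(2) by force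
    qed
  qed
  then show ?thesis by (simp only: alpha_k1_bounded_below_iff[OF assms])
qed

end
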